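(* Let $g,h\in G(\Gamma)$ with $|h|_r=m$ and $|g|_r=n$. Then there exist integers $0\le q\le\min(m,n)$ and $0\le p\le\kappa$ and reduced words $g\equiv g_1\cdots g_n$, $h\equiv h_1\cdots h_m$ (with $g_i\in G_{v_i}$, $h_i\in G_{w_i}$) such that: $g_i=h_i$ for $1\le i\le q$; for $q<i\le q+p$ the syllables $g_i$ and $h_i$ lie in the same vertex group $G_{v_i}$ and $h_i\neq g_i$; the word $$h_m^{-1}\cdots h_{q+p+1}^{-1}\,(h_{q+1}^{-1}g_{q+1})\cdots(h_{q+p}^{-1}g_{q+p})\,g_{q+p+1}\cdots g_n$$ is a reduced word representing $h^{-1}g$ (each parenthesized product being a single syllable); and for all $1\le i,j\le p$ the vertex $v_{q+j}$ lies in $\mathrm{st}(v_{q+i})$, i.e. $g_{q+j},h_{q+j}\in G(\mathrm{st}(v_{q+i}))$.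
   Context: $\Gamma$ is a finite simplicial graph, $\{G_v\}_{v\in\Gamma}$ are groups, and $G(\Gamma)$ is their graph product: the quotient of $\ast_vG_v$ by the normal subgroup generated by $[G_v,G_w]$ for all edges $[vw]$ of $\Gamma$. Vertices joined by an edge are adjacent; $\mathrm{lk}(v)$ is the set of vertices adjacent to $v$, $\mathrm{st}(v)=\mathrm{lk}(v)\cup\{v\}$, and $G(\mathrm{lk}(v))$, $G(\mathrm{st}(v))$ denote the subgroups generated by the $G_w$ with $w$ in these sets. $\kappa$ is the maximal number of pairwise adjacent vertices of $\Gamma$. A word is a finite sequence $(g_1,\dots,g_n)$ with $g_i\in G_{v_i}$ (its syllables); it represents $g_1\cdots g_n$. Allowed moves: swapping two consecutive syllables from adjacent vertex groups (shuffle), multiplying two consecutive syllables from the same vertex group into one, deleting an identity syllable. A word is reduced if no sequence of moves shortens it. Every element has a reduced word and any two reduced words for the same element differ by shuffles; we write $g\equiv g_1\cdots g_n$ for a reduced word of $g$ and $|g|_r=n$ for the reduced word length. *)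

theory Defs
  imports "HOL-Algebra.Group"
begin

type_synonym ('v, 'g) syllable = "'v \<times> 'g"

definition valid_word :: "'v set \<Rightarrow> ('v \<Rightarrow> ('g, 'b) monoid_scheme) \<Rightarrow> ('v, 'g) syllable list \<Rightarrow> bool" where
  "valid_word V G w \<longleftrightarrow> (\<forall>(v, x) \<in> set w. v \<in> V \<and> x \<in> carrier (G v))"

inductive move :: "'v set \<Rightarrow> ('v \<Rightarrow> 'v \<Rightarrow> bool) \<Rightarrow> ('v \<Rightarrow> ('g, 'b) monoid_scheme)
    \<Rightarrow> ('v, 'g) syllable list \<Rightarrow> ('v, 'g) syllable list \<Rightarrow> bool"
  for V adj G where
  shuffle: "valid_word V G (ws @ [(v, x), (w, y)] @ us) \<Longrightarrow> adj v w \<Longrightarrow>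
     move V adj G (ws @ [(v, x), (w, y)] @ us) (ws @ [(w, y), (v, x)] @ us)"
| merge: "valid_word V G (ws @ [(v, x), (v, y)] @ us) \<Longrightarrow>
     move V adj G (ws @ [(v, x), (v, y)] @ us) (ws @ [(v, x \<otimes>\<^bsub>G v\<^esub> y)] @ us)"
| delete: "valid_word V G (ws @ [(v, \<one>\<^bsub>G v\<^esub>)] @ us) \<Longrightarrow>
     move V adj G (ws @ [(v, \<one>\<^bsub>G v\<^esub>)] @ us) (ws @ us)"

text \<open>Two valid words represent the same element of the graph product G(\<Gamma>) iff they are
related by the equivalence generated by the moves (this is the standard presentation of
the graph product as the free product modulo the commutation relations).\<close>

definition word_equiv :: "'v set \<Rightarrow> ('v \<Rightarrow> 'v \<Rightarrow> bool) \<Rightarrow> ('v \<Rightarrow> ('g, 'b) monoid_scheme)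
    \<Rightarrow> ('v, 'g) syllable list \<Rightarrow> ('v, 'g) syllable list \<Rightarrow> bool" where
  "word_equiv V adj G = equivclp (move V adj G)"

definition reduced :: "'v set \<Rightarrow> ('v \<Rightarrow> 'v \<Rightarrow> bool) \<Rightarrow> ('v \<Rightarrow> ('g, 'b) monoid_scheme)
    \<Rightarrow> ('v, 'g) syllable list \<Rightarrow> bool" where
  "reduced V adj G w \<longleftrightarrow> valid_word V G w \<and>
     \<not> (\<exists>w'. (move V adj G)\<^sup>*\<^sup>* w w' \<and> length w' < length w)"

definition word_inv :: "('v \<Rightarrow> ('g, 'b) monoid_scheme) \<Rightarrow> ('v, 'g) syllable list \<Rightarrow> ('v, 'g) syllable list" where
  "word_inv G w = rev (map (\<lambda>(v, x). (v, inv\<^bsub>G v\<^esub> x)) w)"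

definition clique :: "'v set \<Rightarrow> ('v \<Rightarrow> 'v \<Rightarrow> bool) \<Rightarrow> 'v set \<Rightarrow> bool" where
  "clique V adj C \<longleftrightarrow> C \<subseteq> V \<and> (\<forall>u\<in>C. \<forall>w\<in>C. u \<noteq> w \<longrightarrow> adj u w)"

definition clique_number :: "'v set \<Rightarrow> ('v \<Rightarrow> 'v \<Rightarrow> bool) \<Rightarrow> nat" where
  "clique_number V adj = Max {card C | C. clique V adj C}"

definition star :: "('v \<Rightarrow> 'v \<Rightarrow> bool) \<Rightarrow> 'v \<Rightarrow> 'v set" where
  "star adj v = {w. adj v w} \<union> {v}"

end

theory Submission
  imports Defs
begin

text \<open>Reduced words are exactly the words without identity syllables and without pinches,
  a pinch being two syllables of the same vertex separated only by syllables of adjacent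
  vertices (they could be shuffled together and merged).

  Up to shuffling, write \<open>g = C B\<^sub>g R\<^sub>g\<close> and \<open>h = C B\<^sub>h R\<^sub>h\<close>, where the blocks
  \<open>B\<^sub>g\<close>, \<open>B\<^sub>h\<close> consist of pairwise commuting syllables on the same vertices with different
  entries, and take such a splitting with \<open>|C| + |B\<^sub>g|\<close> maximal. Cancelling \<open>C\<close> and merging
  the blocks syllable by syllable turns \<open>h\<^sup>-\<^sup>1g\<close> into \<open>R\<^sub>h\<^sup>-\<^sup>1 (B\<^sub>h\<^sup>-\<^sup>1B\<^sub>g) R\<^sub>g\<close>. A pinch of
  this word lies inside \<open>h\<close> or inside \<open>g\<close>, which are reduced, unless it joins a syllable of
  \<open>R\<^sub>h\<close> to a syllable of \<open>R\<^sub>g\<close>; then both can be shuffled to the front of \<open>R\<^sub>h\<close> and \<open>R\<^sub>g\<close>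
  and appended to \<open>C\<close> (if they are equal) or to the blocks (if not), contradicting maximality.\<close>

lemma clique_card_le_clique_number:
  assumes "finite V" "clique V adj C"
  shows "card C \<le> clique_number V adj"
proof -
  have "{card C | C. clique V adj C} \<subseteq> card ` Pow V"
    unfolding clique_def by auto
  then have "finite {card C | C. clique V adj C}"
    using assms(1) by (simp add: finite_subset)
  then show ?thesis
    unfolding clique_number_def using assms(2) by (auto intro: Max_ge)
qed

lemma map_eq_append_ConsE:
  assumes "map f w = xs @ u # ys"
  obtains w1 s w2 where "w = w1 @ s # w2" "map f w1 = xs" "f s = u" "map f w2 = ys"
  using assms by (auto simp: map_eq_append_conv map_eq_Cons_conv)

locale graph_product =
  fixes V :: "'v set" and adj :: "'v \<Rightarrow> 'v \<Rightarrow> bool"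
    and G :: "'v \<Rightarrow> ('g, 'b) monoid_scheme"
  assumes adj_sym: "\<And>u w. adj u w \<Longrightarrow> adj w u"
    and adj_irrefl: "\<And>u. \<not> adj u u"
    and vertex_group: "\<And>v. v \<in> V \<Longrightarrow> group (G v)"
begin

abbreviation "valid \<equiv> valid_word V G"

abbreviation "winv \<equiv> word_inv G"

section \<open>Words and moves\<close>

lemma valid_append [simp]: "valid (a @ b) \<longleftrightarrow> valid a \<and> valid b"
  by (auto simp: valid_word_def)

lemma valid_Cons [simp]: "valid (x # b) \<longleftrightarrow> fst x \<in> V \<and> snd x \<in> carrier (G (fst x)) \<and> valid b"
  by (auto simp: valid_word_def)

lemma valid_Nil [simp]: "valid []"
  by (simp add: valid_word_def)

lemma word_inv_append [simp]: "winv (a @ b) = winv b @ winv a"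
  by (simp add: word_inv_def)

lemma word_inv_Cons [simp]: "winv (x # b) = winv b @ [(fst x, inv\<^bsub>G (fst x)\<^esub> snd x)]"
  by (simp add: word_inv_def split: prod.splits)

lemma word_inv_Nil [simp]: "winv [] = []"
  by (simp add: word_inv_def)

lemma map_fst_word_inv [simp]: "map fst (winv w) = rev (map fst w)"
  by (induction w) auto

lemma valid_word_inv: "valid w \<Longrightarrow> valid (winv w)"
  by (induction w) (auto intro: group.inv_closed vertex_group)

lemma move_valid: "move V adj G a b \<Longrightarrow> valid a \<and> valid b"
  by (induction rule: move.induct) (auto intro: monoid.m_closed group.is_monoid vertex_group)

lemma move_append_context:
  assumes "move V adj G a b" "valid X" "valid Y"
  shows "move V adj G (X @ a @ Y) (X @ b @ Y)"
  using assms
proof (induction rule: move.induct)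
  case (shuffle ws v x w y us)
  then show ?case using move.shuffle[of V G "X @ ws" v x w y "us @ Y" adj] by simp
next
  case (merge ws v x y us)
  then show ?case using move.merge[of V G "X @ ws" v x y "us @ Y" adj] by simp
next
  case (delete ws v us)
  then show ?case using move.delete[of V G "X @ ws" v "us @ Y" adj] by simp
qed

lemma move_word_inv:
  assumes "move V adj G a b"
  shows "move V adj G (winv a) (winv b)"
  using assms
proof (induction rule: move.induct)
  case (shuffle ws v x w y us)
  then show ?case
    using move.shuffle[of V G "winv us" w "inv\<^bsub>G w\<^esub> y" v "inv\<^bsub>G v\<^esub> x" "winv ws" adj]
      valid_word_inv[OF shuffle(1)] adj_sym by simp
next
  case (merge ws v x y us)
  then have "inv\<^bsub>G v\<^esub> y \<otimes>\<^bsub>G v\<^esub> inv\<^bsub>G v\<^esub> x = inv\<^bsub>G v\<^esub> (x \<otimes>\<^bsub>G v\<^esub> y)"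
    using vertex_group[of v] by (simp add: group.inv_mult_group)
  then show ?case
    using move.merge[of V G "winv us" v "inv\<^bsub>G v\<^esub> y" "inv\<^bsub>G v\<^esub> x" "winv ws" adj]
      valid_word_inv[OF merge] by simp
next
  case (delete ws v us)
  then have "inv\<^bsub>G v\<^esub> \<one>\<^bsub>G v\<^esub> = \<one>\<^bsub>G v\<^esub>"
    using vertex_group[of v] by (simp add: monoid.inv_one group.is_monoid)
  then show ?case
    using move.delete[of V G "winv us" v "winv ws" adj] valid_word_inv[OF delete] by simp
qed

lemma word_equiv_append_context:
  "word_equiv V adj G a b \<Longrightarrow> valid X \<Longrightarrow> valid Y \<Longrightarrow> word_equiv V adj G (X @ a @ Y) (X @ b @ Y)"
  unfolding word_equiv_def
  by (induction rule: equivclp_induct) (auto intro: equivclp_into_equivclp move_append_context)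

lemma word_equiv_word_inv: "word_equiv V adj G a b \<Longrightarrow> word_equiv V adj G (winv a) (winv b)"
  unfolding word_equiv_def
  by (induction rule: equivclp_induct) (auto intro: equivclp_into_equivclp move_word_inv)

lemma word_equiv_trans [trans]: "word_equiv V adj G a b \<Longrightarrow> word_equiv V adj G b c \<Longrightarrow> word_equiv V adj G a c"
  unfolding word_equiv_def by (rule equivclp_trans)

lemma word_equiv_sym: "word_equiv V adj G a b \<Longrightarrow> word_equiv V adj G b a"
  unfolding word_equiv_def by (rule equivclp_sym)

lemma move_word_equiv: "move V adj G a b \<Longrightarrow> word_equiv V adj G a b"
  unfolding word_equiv_def by (rule r_into_equivclp)

lemma word_equiv_inv_append:
  assumes "word_equiv V adj G a a'" "word_equiv V adj G b b'" "valid a'" "valid b"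
  shows "word_equiv V adj G (winv a @ b) (winv a' @ b')"
proof -
  have "word_equiv V adj G ([] @ winv a @ b) ([] @ winv a' @ b)"
    using word_equiv_append_context[OF word_equiv_word_inv[OF assms(1)], of "[]" b] assms(4) by simp
  also have "word_equiv V adj G \<dots> (winv a' @ b' @ [])"
    using word_equiv_append_context[OF assms(2), of "winv a'" "[]"] assms(3) valid_word_inv by simp
  finally show ?thesis by simp
qed

section \<open>Shuffles\<close>

definition shuffle_step :: "('v, 'g) syllable list \<Rightarrow> ('v, 'g) syllable list \<Rightarrow> bool" where
  "shuffle_step a b \<longleftrightarrow> move V adj G a b \<and> length b = length a"

abbreviation "shuffled \<equiv> shuffle_step\<^sup>*\<^sup>*"

lemma shuffled_moves: "shuffled a b \<Longrightarrow> (move V adj G)\<^sup>*\<^sup>* a b"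
  unfolding shuffle_step_def by (induction rule: rtranclp_induct) auto

lemma shuffled_word_equiv: "shuffled a b \<Longrightarrow> word_equiv V adj G a b"
  unfolding word_equiv_def by (auto dest: shuffled_moves intro: rtranlcp_le_equivclp[THEN predicate2D])

lemma shuffled_length: "shuffled a b \<Longrightarrow> length b = length a"
  unfolding shuffle_step_def by (induction rule: rtranclp_induct) auto

lemma shuffled_valid: "shuffled a b \<Longrightarrow> valid a \<Longrightarrow> valid b"
  unfolding shuffle_step_def by (induction rule: rtranclp_induct) (auto dest: move_valid)

lemma reduced_shuffled: "reduced V adj G a \<Longrightarrow> shuffled a b \<Longrightarrow> reduced V adj G b"
  unfolding reduced_def
  by (metis shuffled_length shuffled_moves shuffled_valid rtranclp_trans)

lemma shuffled_past:
  assumes "valid (A @ L @ [b] @ B)" "\<forall>l\<in>set L. adj (fst b) (fst l)"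
  shows "shuffled (A @ L @ [b] @ B) (A @ [b] @ L @ B)"
  using assms
proof (induction L arbitrary: B rule: rev_induct)
  case (snoc l L)
  have "shuffle_step (A @ L @ [l, b] @ B) (A @ L @ [b, l] @ B)"
    using move.shuffle[of V G "A @ L" "fst l" "snd l" "fst b" "snd b" B adj] snoc.prems adj_sym
    by (simp add: shuffle_step_def)
  moreover have "shuffled (A @ L @ [b] @ l # B) (A @ [b] @ L @ l # B)"
    using snoc by simp
  ultimately show ?case by simp
qed simp

section \<open>Pinches and reduced words\<close>

definition pinch_head :: "'v \<Rightarrow> 'v list \<Rightarrow> bool" where
  "pinch_head u vs \<longleftrightarrow> (\<exists>ys zs. vs = ys @ u # zs \<and> (\<forall>y\<in>set ys. adj u y))"

definition pinch :: "'v list \<Rightarrow> bool" where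
  "pinch vs \<longleftrightarrow> (\<exists>xs u ys. vs = xs @ u # ys \<and> pinch_head u ys)"

lemma pinch_head_Nil [simp]: "\<not> pinch_head u []"
  by (simp add: pinch_head_def)

lemma pinch_head_Cons [simp]: "pinch_head u (x # xs) \<longleftrightarrow> x = u \<or> adj u x \<and> pinch_head u xs"
  unfolding pinch_head_def by (auto simp: Cons_eq_append_conv) (metis append_Cons set_ConsD)

lemma pinch_head_append:
  "pinch_head u (xs @ ys) \<longleftrightarrow> pinch_head u xs \<or> (\<forall>x\<in>set xs. adj u x) \<and> pinch_head u ys"
  by (induction xs) auto

lemma pinch_Nil [simp]: "\<not> pinch []"
  by (simp add: pinch_def)

lemma pinch_Cons [simp]: "pinch (x # xs) \<longleftrightarrow> pinch_head x xs \<or> pinch xs"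
  unfolding pinch_def by (auto simp: Cons_eq_append_conv)

lemma pinch_append_left: "pinch ys \<Longrightarrow> pinch (xs @ ys)"
  by (induction xs) auto

lemma pinch_appendE:
  assumes "pinch (xs @ ys)"
  obtains "pinch xs" | "pinch ys"
    | x1 u x2 where "xs = x1 @ u # x2" "\<forall>x\<in>set x2. adj u x" "pinch_head u ys"
  using assms
proof (induction xs)
  case (Cons x xs)
  consider "pinch_head x (xs @ ys)" | "pinch (xs @ ys)"
    using Cons.prems(4) by auto
  then show ?case
  proof cases
    case 1
    then consider "pinch_head x xs" | "\<forall>y\<in>set xs. adj x y" "pinch_head x ys"
      by (auto simp: pinch_head_append)
    then show ?thesis
      by cases (use Cons.prems(1) Cons.prems(3)[of "[]" x xs] in simp_all)
  next
    case 2
    show ?thesis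
    proof (rule Cons.IH)
      fix x1 u x2
      assume "xs = x1 @ u # x2" "\<forall>x\<in>set x2. adj u x" "pinch_head u ys"
      then show thesis using Cons.prems(3)[of "x # x1" u x2] by simp
    qed (use Cons.prems 2 in simp_all)
  qed
qed simp

lemma pinch_iff:
  "pinch vs \<longleftrightarrow> (\<exists>xs u ys zs. vs = xs @ u # ys @ u # zs \<and> (\<forall>y\<in>set ys. adj u y))"
proof
  assume "pinch vs"
  then obtain xs u ys zs where "vs = xs @ u # ys @ u # zs" "\<forall>y\<in>set ys. adj u y"
    unfolding pinch_def pinch_head_def by blast
  then show "\<exists>xs u ys zs. vs = xs @ u # ys @ u # zs \<and> (\<forall>y\<in>set ys. adj u y)"
    by blast
next
  assume "\<exists>xs u ys zs. vs = xs @ u # ys @ u # zs \<and> (\<forall>y\<in>set ys. adj u y)"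
  then obtain xs u ys zs where "vs = xs @ u # ys @ u # zs" "\<forall>y\<in>set ys. adj u y"
    by blast
  then show "pinch vs"
    unfolding pinch_def pinch_head_def by (intro exI[of _ xs] exI[of _ u] exI[of _ "ys @ u # zs"]) auto
qed

lemma pinch_rev [simp]: "pinch (rev vs) \<longleftrightarrow> pinch vs"
proof -
  have "pinch (rev vs)" if "pinch vs" for vs :: "'v list"
  proof -
    obtain xs u ys zs where "vs = xs @ u # ys @ u # zs" "\<forall>y\<in>set ys. adj u y"
      using \<open>pinch vs\<close> unfolding pinch_iff by blast
    then have "rev vs = rev zs @ u # rev ys @ u # rev xs \<and> (\<forall>y\<in>set (rev ys). adj u y)"
      by simp
    then show ?thesis unfolding pinch_iff by blast
  qed
  from this[of vs] this[of "rev vs"] show ?thesis by auto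
qed

lemma pinch_swap:
  assumes "adj a b"
  shows "pinch (ws @ a # b # us) \<longleftrightarrow> pinch (ws @ b # a # us)"
proof -
  have head: "pinch_head u (ws @ a # b # us) \<longleftrightarrow> pinch_head u (ws @ b # a # us)" for u ws
    using assms adj_sym adj_irrefl by (auto simp: pinch_head_append)
  show ?thesis
  proof (induction ws)
    case Nil
    show ?case using assms adj_sym adj_irrefl by auto
  qed (simp add: head)
qed

definition identity_free :: "('v, 'g) syllable list \<Rightarrow> bool" where
  "identity_free w \<longleftrightarrow> (\<forall>(v, x)\<in>set w. x \<noteq> \<one>\<^bsub>G v\<^esub>)"

lemma identity_free_append [simp]: "identity_free (a @ b) \<longleftrightarrow> identity_free a \<and> identity_free b"
  by (auto simp: identity_free_def)

lemma identity_free_word_inv: "valid w \<Longrightarrow> identity_free w \<Longrightarrow> identity_free (winv w)"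
  by (induction w) (auto simp: identity_free_def group.inv_eq_1_iff vertex_group)

lemma reduced_identity_free:
  assumes "reduced V adj G w"
  shows "identity_free w"
  unfolding identity_free_def
proof (clarify)
  fix v assume "(v, \<one>\<^bsub>G v\<^esub>) \<in> set w"
  then obtain ws us where w: "w = ws @ [(v, \<one>\<^bsub>G v\<^esub>)] @ us"
    by (metis append_Cons append_Nil split_list)
  then have "move V adj G w (ws @ us)"
    using move.delete[of V G ws v us adj] assms by (simp add: reduced_def)
  then show False
    using assms w unfolding reduced_def by auto
qed

lemma reduced_pinch_free:
  assumes "reduced V adj G w"
  shows "\<not> pinch (map fst w)"
proof
  assume "pinch (map fst w)"
  then obtain xs u ys zs where split: "map fst w = xs @ u # ys @ u # zs"
    and adj: "\<forall>y\<in>set ys. adj u y"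
    unfolding pinch_iff by blast
  from split obtain w1 s w' where "w = w1 @ s # w'" "fst s = u" "map fst w' = ys @ u # zs"
    by (rule map_eq_append_ConsE)
  moreover from this(3) obtain w2 t w3 where "w' = w2 @ t # w3" "fst t = u" "map fst w2 = ys"
    by (rule map_eq_append_ConsE)
  ultimately obtain x y where w: "w = w1 @ [(u, x)] @ w2 @ [(u, y)] @ w3" and w2: "map fst w2 = ys"
    by (metis append_Cons append_Nil prod.collapse)
  have valid: "valid w" using assms by (simp add: reduced_def)
  have "shuffled w ((w1 @ [(u, x)]) @ [(u, y)] @ w2 @ w3)"
    using shuffled_past[of "w1 @ [(u, x)]" w2 "(u, y)" w3] valid adj unfolding w w2[symmetric] by simp
  moreover have "move V adj G (w1 @ [(u, x), (u, y)] @ w2 @ w3) (w1 @ [(u, x \<otimes>\<^bsub>G u\<^esub> y)] @ w2 @ w3)"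
    by (rule move.merge) (use valid w in simp)
  ultimately have "(move V adj G)\<^sup>*\<^sup>* w (w1 @ [(u, x \<otimes>\<^bsub>G u\<^esub> y)] @ w2 @ w3)"
    by (auto dest: shuffled_moves intro: rtranclp.rtrancl_into_rtrancl)
  then show False
    using assms w unfolding reduced_def by fastforce
qed

lemma reducedI:
  assumes "valid w" "\<not> pinch (map fst w)" "identity_free w"
  shows "reduced V adj G w"
proof -
  have invariant: "length w' = length w \<and> valid w' \<and> \<not> pinch (map fst w') \<and> identity_free w'"
    if "(move V adj G)\<^sup>*\<^sup>* w w'" for w'
    using that
  proof (induction rule: rtranclp_induct)
    case (step y z)
    from step.hyps(2) show ?case
    proof cases
      case (shuffle ws v x u y' us)
      then have "pinch (map fst z) \<longleftrightarrow> pinch (map fst y)"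
        using pinch_swap[of u v "map fst ws" "map fst us"] adj_sym by simp
      moreover have "set z = set y" "length z = length y"
        using shuffle by auto
      ultimately show ?thesis
        using step.IH move_valid[OF step.hyps(2)] unfolding identity_free_def by simp
    next
      case (merge ws v x y' us)
      then have "pinch (map fst y)"
        using pinch_append_left[of "v # v # map fst us" "map fst ws"] by simp
      then show ?thesis using step.IH by simp
    next
      case (delete ws v us)
      then show ?thesis using step.IH unfolding identity_free_def by simp
    qed
  qed (use assms in simp)
  show ?thesis
    unfolding reduced_def using assms(1) invariant by (metis less_irrefl)
qed

lemma reduced_iff:
  "reduced V adj G w \<longleftrightarrow> valid w \<and> \<not> pinch (map fst w) \<and> identity_free w"
  using reducedI reduced_pinch_free reduced_identity_free reduced_def by blast

section \<open>Cancellation\<close>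

lemma word_equiv_cancel:
  "valid X \<Longrightarrow> valid C \<Longrightarrow> valid Y \<Longrightarrow> word_equiv V adj G (X @ winv C @ C @ Y) (X @ Y)"
proof (induction C)
  case Nil
  then show ?case by (simp add: word_equiv_def)
next
  case (Cons c C)
  obtain v x where c: "c = (v, x)" by fastforce
  have x: "v \<in> V" "x \<in> carrier (G v)" and grp: "group (G v)"
    using Cons.prems c vertex_group by auto
  have "move V adj G ((X @ winv C) @ [(v, inv\<^bsub>G v\<^esub> x), (v, x)] @ C @ Y)
      ((X @ winv C) @ [(v, inv\<^bsub>G v\<^esub> x \<otimes>\<^bsub>G v\<^esub> x)] @ C @ Y)"
    by (rule move.merge) (use Cons.prems x grp valid_word_inv in \<open>simp add: group.inv_closed\<close>)
  moreover have "move V adj G ((X @ winv C) @ [(v, \<one>\<^bsub>G v\<^esub>)] @ C @ Y) ((X @ winv C) @ C @ Y)"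
    by (rule move.delete) (use Cons.prems x grp valid_word_inv in \<open>simp add: monoid.one_closed group.is_monoid\<close>)
  moreover have "inv\<^bsub>G v\<^esub> x \<otimes>\<^bsub>G v\<^esub> x = \<one>\<^bsub>G v\<^esub>"
    using grp x by (simp add: group.l_inv)
  ultimately have "word_equiv V adj G (X @ winv (c # C) @ (c # C) @ Y) (X @ winv C @ C @ Y)"
    using c by (auto intro: word_equiv_trans move_word_equiv)
  then show ?case
    using Cons word_equiv_trans by auto
qed

definition left_quotients :: "('v, 'g) syllable list \<Rightarrow> ('v, 'g) syllable list \<Rightarrow> ('v, 'g) syllable list" where
  "left_quotients hs gs = map2 (\<lambda>h g. (fst g, inv\<^bsub>G (fst g)\<^esub> snd h \<otimes>\<^bsub>G (fst g)\<^esub> snd g)) hs gs"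

lemma map_fst_left_quotients:
  "length Bh = length Bg \<Longrightarrow> map fst (left_quotients Bh Bg) = map fst Bg"
  by (induction Bh Bg rule: list_induct2) (auto simp: left_quotients_def)

lemma left_quotients_valid_identity_free:
  assumes "list_all2 (\<lambda>g h. fst g = fst h \<and> snd g \<noteq> snd h) Bg Bh" "valid Bg" "valid Bh"
  shows "valid (left_quotients Bh Bg) \<and> identity_free (left_quotients Bh Bg)"
  using assms
proof (induction rule: list_all2_induct)
  case Nil
  then show ?case by (simp add: left_quotients_def identity_free_def)
next
  case (Cons g Bg h Bh)
  obtain v x y where gh: "g = (v, y)" "h = (v, x)" "x \<noteq> y"
    using Cons.hyps(1) by (cases g, cases h) auto
  have xy: "v \<in> V" "x \<in> carrier (G v)" "y \<in> carrier (G v)" and grp: "group (G v)"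
    using Cons.prems gh vertex_group by auto
  have "inv\<^bsub>G v\<^esub> x \<otimes>\<^bsub>G v\<^esub> y \<noteq> \<one>\<^bsub>G v\<^esub>"
    using gh(3) grp xy by (simp add: group.inv_solve_left' group.is_monoid monoid.one_closed monoid.r_one)
  then show ?case
    using Cons gh xy grp
    by (auto simp: left_quotients_def identity_free_def group.inv_closed group.is_monoid monoid.m_closed)
qed

lemma word_equiv_left_quotients:
  assumes "map fst Bh = map fst Bg" "distinct (map fst Bg)" "pairwise adj (fst ` set Bg)"
    and "valid X" "valid Bh" "valid Bg" "valid Y"
  shows "word_equiv V adj G (X @ winv Bh @ Bg @ Y) (X @ left_quotients Bh Bg @ Y)"
  using assms
proof (induction Bh arbitrary: Bg X)
  case Nil
  then show ?case by (simp add: left_quotients_def word_equiv_def)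
next
  case (Cons h Bh)
  obtain g Bg' where Bg: "Bg = g # Bg'" using Cons.prems(1) by (cases Bg) auto
  obtain v x y where hg: "h = (v, x)" "g = (v, y)"
    using Cons.prems(1) Bg by (cases h, cases g) auto
  have xy: "v \<in> V" "x \<in> carrier (G v)" "y \<in> carrier (G v)" and grp: "group (G v)"
    using Cons.prems(5,6) Bg hg vertex_group by auto
  define z where "z = inv\<^bsub>G v\<^esub> x \<otimes>\<^bsub>G v\<^esub> y"
  have z: "z \<in> carrier (G v)"
    unfolding z_def using grp xy by (simp add: group.inv_closed group.is_monoid monoid.m_closed)
  have "word_equiv V adj G ((X @ winv Bh) @ [(v, inv\<^bsub>G v\<^esub> x), (v, y)] @ Bg' @ Y)
      (X @ winv Bh @ [(v, z)] @ Bg' @ Y)"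
    using move_word_equiv[OF move.merge[of V G "X @ winv Bh" v "inv\<^bsub>G v\<^esub> x" y "Bg' @ Y" adj]]
      Cons.prems Bg xy grp valid_word_inv by (simp add: group.inv_closed z_def)
  also have "word_equiv V adj G \<dots> (X @ [(v, z)] @ winv Bh @ Bg' @ Y)"
  proof (rule shuffled_word_equiv, rule shuffled_past)
    show "valid (X @ winv Bh @ [(v, z)] @ Bg' @ Y)"
      using Cons.prems Bg z xy valid_word_inv by simp
    have "fst ` set (winv Bh) = set (map fst Bg')"
      using Cons.prems(1) Bg by (simp flip: set_map)
    moreover have "v \<notin> set (map fst Bg')" "\<forall>u\<in>set (map fst Bg'). adj v u"
      using Cons.prems(2,3) Bg hg by (auto simp: pairwise_def)
    ultimately show "\<forall>l\<in>set (winv Bh). adj (fst (v, z)) (fst l)"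
      by (metis fst_conv imageI)
  qed
  also have "word_equiv V adj G \<dots> (X @ [(v, z)] @ left_quotients Bh Bg' @ Y)"
    using Cons.IH[of Bg' "X @ [(v, z)]"] Cons.prems Bg hg z xy by (simp add: pairwise_insert)
  finally show ?case
    using Bg hg by (simp add: left_quotients_def z_def)
qed

section \<open>Maximal splittings\<close>

definition splitting :: "('v, 'g) syllable list \<Rightarrow> ('v, 'g) syllable list \<Rightarrow> ('v, 'g) syllable list
    \<Rightarrow> ('v, 'g) syllable list \<Rightarrow> ('v, 'g) syllable list \<Rightarrow> ('v, 'g) syllable list
    \<Rightarrow> ('v, 'g) syllable list \<Rightarrow> bool" where
  "splitting gr hr C Bg Bh Rg Rh \<longleftrightarrow>
     shuffled gr (C @ Bg @ Rg) \<and> shuffled hr (C @ Bh @ Rh) \<and>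
     list_all2 (\<lambda>g h. fst g = fst h \<and> snd g \<noteq> snd h) Bg Bh \<and>
     distinct (map fst Bg) \<and> clique V adj (fst ` set Bg)"

lemma splitting_map_fst_block:
  "splitting gr hr C Bg Bh Rg Rh \<Longrightarrow> map fst Bh = map fst Bg"
proof -
  assume "splitting gr hr C Bg Bh Rg Rh"
  then have "list_all2 (\<lambda>g h. fst g = fst h \<and> snd g \<noteq> snd h) Bg Bh"
    by (simp add: splitting_def)
  then show ?thesis
    by (induction rule: list_all2_induct) auto
qed

lemma splitting_trivial: "splitting gr hr [] [] [] gr hr"
  by (simp add: splitting_def clique_def)

lemma splitting_reduced:
  assumes "splitting gr hr C Bg Bh Rg Rh" "reduced V adj G gr" "reduced V adj G hr"
  shows "reduced V adj G (C @ Bg @ Rg)" "reduced V adj G (C @ Bh @ Rh)"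
  using assms reduced_shuffled unfolding splitting_def by blast+

lemma splitting_extend:
  assumes split: "splitting gr hr C Bg Bh Rg Rh" and "valid gr" "valid hr"
    and Rg: "Rg = g1 @ t # g2" and Rh: "Rh = h1 @ s # h2" and "fst s = fst t"
    and adj_g: "\<forall>u\<in>fst ` set (Bg @ g1). adj (fst t) u" and adj_h: "\<forall>u\<in>fst ` set h1. adj (fst t) u"
  obtains C' Bg' Bh' Rg' Rh' where "splitting gr hr C' Bg' Bh' Rg' Rh'"
    "length C + length Bg < length C' + length Bg'"
proof -
  have sg: "shuffled gr (C @ Bg @ Rg)" and sh: "shuffled hr (C @ Bh @ Rh)"
    using split by (simp_all add: splitting_def)
  have valid: "valid (C @ Bg @ Rg)" "valid (C @ Bh @ Rh)"
    using sg sh assms(2,3) shuffled_valid by blast+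
  have "fst ` set Bh = fst ` set Bg"
    using splitting_map_fst_block[OF split] by (metis list.set_map)
  then have adj_Bh: "\<forall>u\<in>fst ` set Bh. adj (fst t) u"
    using adj_g by simp
  have "shuffled (C @ Bg @ Rg) (C @ Bg @ t # g1 @ g2)"
    using shuffled_past[of "C @ Bg" g1 t g2] valid adj_g Rg by simp
  with sg have sg': "shuffled gr (C @ Bg @ t # g1 @ g2)"
    by simp
  have "shuffled (C @ Bh @ Rh) (C @ Bh @ s # h1 @ h2)"
    using shuffled_past[of "C @ Bh" h1 s h2] valid adj_h Rh \<open>fst s = fst t\<close> by simp
  with sh have sh': "shuffled hr (C @ Bh @ s # h1 @ h2)"
    by simp
  show thesis
  proof (cases "s = t")
    case True
    have "shuffled (C @ Bg @ t # g1 @ g2) ((C @ [t]) @ Bg @ g1 @ g2)"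
      using shuffled_past[of C Bg t "g1 @ g2"] shuffled_valid[OF sg' assms(2)] adj_g by simp
    moreover have "shuffled (C @ Bh @ t # h1 @ h2) ((C @ [t]) @ Bh @ h1 @ h2)"
      using shuffled_past[of C Bh t "h1 @ h2"] shuffled_valid[OF sh' assms(3)] adj_Bh True by simp
    ultimately have "splitting gr hr (C @ [t]) Bg Bh (g1 @ g2) (h1 @ h2)"
      using split sg' sh' True unfolding splitting_def by auto
    then show thesis by (rule that) simp
  next
    case False
    have t: "fst t \<in> V" "fst t \<notin> fst ` set Bg"
      using valid Rg adj_g adj_irrefl unfolding set_append image_Un by auto
    have "clique V adj (insert (fst t) (fst ` set Bg))"
      using split t adj_g adj_sym unfolding splitting_def clique_def by auto
    then have "splitting gr hr C (Bg @ [t]) (Bh @ [s]) (g1 @ g2) (h1 @ h2)"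
      using split sg' sh' t False \<open>fst s = fst t\<close>
      unfolding splitting_def by (auto simp: list_all2_appendI prod_eq_iff)
    then show thesis by (rule that) simp
  qed
qed

lemma splitting_extend_pinch:
  assumes split: "splitting gr hr C Bg Bh Rg Rh" and "valid gr" "valid hr"
    and Rh: "map fst Rh = ys @ u # zs" "\<forall>y\<in>set ys. adj u y"
    and Rg: "pinch_head u (map fst Rg)" and "\<forall>x\<in>set (map fst Bg). adj u x"
  obtains C' Bg' Bh' Rg' Rh' where "splitting gr hr C' Bg' Bh' Rg' Rh'"
    "length C + length Bg < length C' + length Bg'"
proof -
  obtain d1 d2 where "map fst Rg = d1 @ u # d2" "\<forall>x\<in>set d1. adj u x"
    using Rg unfolding pinch_head_def by blast
  then obtain g1 t g2 where Rg': "Rg = g1 @ t # g2" "fst t = u" "\<forall>x\<in>fst ` set g1. adj u x"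
    by (auto elim!: map_eq_append_ConsE)
  from Rh(1) obtain h1 s h2 where Rh': "Rh = h1 @ s # h2" "fst s = u" "map fst h1 = ys"
    by (rule map_eq_append_ConsE)
  show thesis
  proof (rule splitting_extend[OF split assms(2,3) Rg'(1) Rh'(1)])
    show "fst s = fst t" using Rg' Rh' by simp
    show "\<forall>v\<in>fst ` set (Bg @ g1). adj (fst t) v" using assms(7) Rg' by auto
    show "\<forall>v\<in>fst ` set h1. adj (fst t) v" using Rh(2) Rg' Rh' by (simp flip: set_map)
  qed (rule that)
qed

lemma maximal_splitting_exists:
  obtains C Bg Bh Rg Rh where "splitting gr hr C Bg Bh Rg Rh"
    "\<And>C' Bg' Bh' Rg' Rh'. splitting gr hr C' Bg' Bh' Rg' Rh' \<Longrightarrow>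
      length C' + length Bg' \<le> length C + length Bg"
proof -
  let ?P = "\<lambda>(C, Bg, Bh, Rg, Rh). splitting gr hr C Bg Bh Rg Rh"
  let ?f = "\<lambda>(C, Bg, Bh, Rg, Rh). length C + length Bg"
  have start: "?P ([], [], [], gr, hr)"
    using splitting_trivial by simp
  have bounded: "\<forall>y. ?P y \<longrightarrow> ?f y < Suc (length gr)"
  proof (clarify)
    fix C Bg Bh Rg Rh assume "splitting gr hr C Bg Bh Rg Rh"
    then have "length (C @ Bg @ Rg) = length gr"
      unfolding splitting_def using shuffled_length by blast
    then show "length C + length Bg < Suc (length gr)" by simp
  qed
  obtain x where x: "?P x" "\<forall>y. ?P y \<longrightarrow> ?f y \<le> ?f x"
    using ex_has_greatest_nat[OF start bounded] by blast
  obtain C Bg Bh Rg Rh where x_def: "x = (C, Bg, Bh, Rg, Rh)"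
    by (cases x)
  show thesis
  proof (rule that)
    show "splitting gr hr C Bg Bh Rg Rh" using x(1) x_def by simp
    fix C' Bg' Bh' Rg' Rh' assume "splitting gr hr C' Bg' Bh' Rg' Rh'"
    then show "length C' + length Bg' \<le> length C + length Bg"
      using x(2)[rule_format, of "(C', Bg', Bh', Rg', Rh')"] x_def by simp
  qed
qed

lemma maximal_splitting_pinch_free:
  assumes split: "splitting gr hr C Bg Bh Rg Rh"
    and red: "reduced V adj G gr" "reduced V adj G hr"
    and max: "\<And>C' Bg' Bh' Rg' Rh'. splitting gr hr C' Bg' Bh' Rg' Rh' \<Longrightarrow>
      length C' + length Bg' \<le> length C + length Bg"
  shows "\<not> pinch (rev (map fst Rh) @ map fst Bg @ map fst Rg)"
proof
  have no_pinch_g: "\<not> pinch (map fst C @ map fst Bg @ map fst Rg)"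
    and no_pinch_h: "\<not> pinch (map fst C @ map fst Bg @ map fst Rh)"
    using splitting_reduced[OF split red] reduced_pinch_free splitting_map_fst_block[OF split]
    by fastforce+
  assume "pinch (rev (map fst Rh) @ map fst Bg @ map fst Rg)"
  then show False
  proof (cases rule: pinch_appendE)
    case 1
    then show False using no_pinch_h pinch_append_left by simp
  next
    case 2
    then show False using no_pinch_g pinch_append_left by simp
  next
    case (3 x1 u x2)
    then have Rh: "map fst Rh = rev x2 @ u # rev x1"
      by (metis rev_rev_ident rev.simps(2) rev_append append.assoc append_Cons append_Nil)
    have adj_x2: "\<forall>x\<in>set (rev x2). adj u x" using 3 by simp
    from 3 consider "pinch_head u (map fst Bg)"
      | "\<forall>x\<in>set (map fst Bg). adj u x" "pinch_head u (map fst Rg)"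
      by (auto simp: pinch_head_append)
    then show False
    proof cases
      case 1
      then obtain b1 b2 where Bg: "map fst Bg = b1 @ u # b2" "\<forall>x\<in>set b1. adj u x"
        unfolding pinch_head_def by blast
      have "distinct (b1 @ u # b2)" "clique V adj (set (b1 @ u # b2))"
        using split unfolding splitting_def Bg(1)[symmetric] by simp_all
      then have "\<forall>x\<in>set b2. adj u x"
        unfolding clique_def by auto
      then have "pinch_head u (b2 @ map fst Rh)"
        using adj_x2 Rh by (simp add: pinch_head_append)
      then have "pinch ((map fst C @ b1) @ u # b2 @ map fst Rh)"
        unfolding pinch_def by blast
      then show False using no_pinch_h Bg(1) by simp
    next
      case 2
      have "valid gr" "valid hr" using red by (simp_all add: reduced_def)
      then show False
        by (rule splitting_extend_pinch[OF split _ _ Rh adj_x2 2(2,1)]) (use max in fastforce)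
    qed
  qed
qed

lemma maximal_splitting_quotient_reduced:
  assumes split: "splitting gr hr C Bg Bh Rg Rh"
    and red: "reduced V adj G gr" "reduced V adj G hr"
    and max: "\<And>C' Bg' Bh' Rg' Rh'. splitting gr hr C' Bg' Bh' Rg' Rh' \<Longrightarrow>
      length C' + length Bg' \<le> length C + length Bg"
  shows "reduced V adj G (winv Rh @ left_quotients Bh Bg @ Rg)"
proof (rule reducedI)
  have g: "valid (C @ Bg @ Rg)" "identity_free (C @ Bg @ Rg)"
    and h: "valid (C @ Bh @ Rh)" "identity_free (C @ Bh @ Rh)"
    using splitting_reduced[OF split red] by (simp_all add: reduced_iff)
  have block: "list_all2 (\<lambda>g h. fst g = fst h \<and> snd g \<noteq> snd h) Bg Bh"
    using split by (simp add: splitting_def)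
  then have "length Bh = length Bg"
    by (simp add: list_all2_lengthD)
  then show "\<not> pinch (map fst (winv Rh @ left_quotients Bh Bg @ Rg))"
    using maximal_splitting_pinch_free[OF split red max] by (simp add: map_fst_left_quotients)
  show "valid (winv Rh @ left_quotients Bh Bg @ Rg)"
    using g h left_quotients_valid_identity_free[OF block] valid_word_inv by simp
  show "identity_free (winv Rh @ left_quotients Bh Bg @ Rg)"
    using g h left_quotients_valid_identity_free[OF block] identity_free_word_inv by simp
qed

lemma splitting_word_equiv:
  assumes split: "splitting gr hr C Bg Bh Rg Rh" and "valid gr" "valid hr"
  shows "word_equiv V adj G (winv (C @ Bh @ Rh) @ C @ Bg @ Rg) (winv Rh @ left_quotients Bh Bg @ Rg)"
proof -
  have "valid (C @ Bg @ Rg)" "valid (C @ Bh @ Rh)"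
    using split assms(2,3) shuffled_valid unfolding splitting_def by blast+
  then have valid: "valid C" "valid Bg" "valid Rg" "valid Bh" "valid Rh"
    by simp_all
  have "word_equiv V adj G ((winv Rh @ winv Bh) @ winv C @ C @ Bg @ Rg) ((winv Rh @ winv Bh) @ Bg @ Rg)"
    using valid by (intro word_equiv_cancel) (simp_all add: valid_word_inv)
  also have "word_equiv V adj G \<dots> (winv Rh @ left_quotients Bh Bg @ Rg)"
    using word_equiv_left_quotients[of Bh Bg "winv Rh" Rg] split valid valid_word_inv
      splitting_map_fst_block[OF split] by (simp add: splitting_def clique_def pairwise_def)
  finally show ?thesis by simp
qed

lemma splitting_block_length_le_clique_number:
  assumes "finite V" "splitting gr hr C Bg Bh Rg Rh"
  shows "length Bg \<le> clique_number V adj"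
proof -
  have "distinct (map fst Bg)" "clique V adj (fst ` set Bg)"
    using assms(2) by (simp_all add: splitting_def)
  then show ?thesis
    using clique_card_le_clique_number[OF assms(1)] distinct_card by fastforce
qed

lemma splitting_nth:
  assumes "splitting gr hr C Bg Bh Rg Rh"
  defines "gs \<equiv> C @ Bg @ Rg" and "hs \<equiv> C @ Bh @ Rh" and "q \<equiv> length C" and "p \<equiv> length Bg"
  shows "\<forall>i<q. gs ! i = hs ! i"
    and "\<forall>i. q \<le> i \<and> i < q + p \<longrightarrow> fst (gs ! i) = fst (hs ! i) \<and> snd (gs ! i) \<noteq> snd (hs ! i)"
    and "drop (q + p) gs = Rg" "drop (q + p) hs = Rh"
    and "map (\<lambda>i. (fst (gs ! i), inv\<^bsub>G (fst (gs ! i))\<^esub> (snd (hs ! i)) \<otimes>\<^bsub>G (fst (gs ! i))\<^esub> snd (gs ! i)))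
           [q..<q + p] = left_quotients Bh Bg"
    and "\<forall>i<p. \<forall>j<p. fst (gs ! (q + j)) \<in> star adj (fst (gs ! (q + i)))"
proof -
  have block: "list_all2 (\<lambda>g h. fst g = fst h \<and> snd g \<noteq> snd h) Bg Bh"
    and clique: "clique V adj (fst ` set Bg)"
    using assms(1) by (simp_all add: splitting_def)
  then have lengths: "length Bh = p"
    unfolding p_def by (simp add: list_all2_lengthD)
  show "\<forall>i<q. gs ! i = hs ! i" "drop (q + p) gs = Rg" "drop (q + p) hs = Rh"
    unfolding gs_def hs_def q_def p_def using lengths p_def by (simp_all add: nth_append)
  show "\<forall>i. q \<le> i \<and> i < q + p \<longrightarrow> fst (gs ! i) = fst (hs ! i) \<and> snd (gs ! i) \<noteq> snd (hs ! i)"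
    unfolding gs_def hs_def q_def p_def using block by (auto simp: nth_append list_all2_conv_all_nth)
  show "map (\<lambda>i. (fst (gs ! i), inv\<^bsub>G (fst (gs ! i))\<^esub> (snd (hs ! i)) \<otimes>\<^bsub>G (fst (gs ! i))\<^esub> snd (gs ! i)))
      [q..<q + p] = left_quotients Bh Bg"
    unfolding gs_def hs_def q_def using lengths p_def
    by (intro nth_equalityI) (auto simp: left_quotients_def nth_append)
  show "\<forall>i<p. \<forall>j<p. fst (gs ! (q + j)) \<in> star adj (fst (gs ! (q + i)))"
    unfolding gs_def q_def p_def using clique unfolding clique_def star_def
    by (auto simp: nth_append) (metis nth_mem)
qed

end

theorem mainTheorem4:
  fixes V :: "'v set" and adj :: "'v \<Rightarrow> 'v \<Rightarrow> bool"
    and G :: "'v \<Rightarrow> ('g, 'b) monoid_scheme"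
    and wg wh :: "('v, 'g) syllable list" and m n :: nat
  assumes "finite V"
    and "\<And>u w. adj u w \<Longrightarrow> u \<in> V \<and> w \<in> V"
    and "\<And>u w. adj u w \<Longrightarrow> adj w u"
    and "\<And>u. \<not> adj u u"
    and "\<And>v. v \<in> V \<Longrightarrow> group (G v)"
    and "valid_word V G wg" and "valid_word V G wh"
    and "\<exists>w. reduced V adj G w \<and> word_equiv V adj G w wh \<and> length w = m"
    and "\<exists>w. reduced V adj G w \<and> word_equiv V adj G w wg \<and> length w = n"
  shows "\<exists>q p gs hs.
     q \<le> min m n \<and> p \<le> clique_number V adj \<and> q + p \<le> min m n \<and>
     reduced V adj G gs \<and> word_equiv V adj G gs wg \<and> length gs = n \<and>
     reduced V adj G hs \<and> word_equiv V adj G hs wh \<and> length hs = m \<and>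
     (\<forall>i<q. gs ! i = hs ! i) \<and>
     (\<forall>i. q \<le> i \<and> i < q + p \<longrightarrow> fst (gs ! i) = fst (hs ! i) \<and> snd (gs ! i) \<noteq> snd (hs ! i)) \<and>
     (let r = word_inv G (drop (q + p) hs)
            @ map (\<lambda>i. (fst (gs ! i), inv\<^bsub>G (fst (gs ! i))\<^esub> (snd (hs ! i)) \<otimes>\<^bsub>G (fst (gs ! i))\<^esub> snd (gs ! i)))
                  [q..<q + p]
            @ drop (q + p) gs
      in reduced V adj G r \<and> word_equiv V adj G r (word_inv G wh @ wg)) \<and>
     (\<forall>i<p. \<forall>j<p. fst (gs ! (q + j)) \<in> star adj (fst (gs ! (q + i))))"
proof -
  interpret graph_product V adj G
    using assms(3-5) by (simp add: graph_product_def)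
  obtain hr where hr: "reduced V adj G hr" "word_equiv V adj G hr wh" "length hr = m"
    using assms(8) by blast
  obtain gr where gr: "reduced V adj G gr" "word_equiv V adj G gr wg" "length gr = n"
    using assms(9) by blast
  obtain C Bg Bh Rg Rh where split: "splitting gr hr C Bg Bh Rg Rh"
    and max: "\<And>C' Bg' Bh' Rg' Rh'. splitting gr hr C' Bg' Bh' Rg' Rh' \<Longrightarrow>
      length C' + length Bg' \<le> length C + length Bg"
    using maximal_splitting_exists[of gr hr] by blast
  have shuffled: "shuffled gr (C @ Bg @ Rg)" "shuffled hr (C @ Bh @ Rh)"
    using split by (simp_all add: splitting_def)
  have equiv: "word_equiv V adj G (C @ Bg @ Rg) wg" "word_equiv V adj G (C @ Bh @ Rh) wh"
    using shuffled gr hr by (metis word_equiv_sym word_equiv_trans shuffled_word_equiv)+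
  have "word_equiv V adj G (winv Rh @ left_quotients Bh Bg @ Rg) (winv wh @ wg)"
    using splitting_word_equiv[OF split] word_equiv_inv_append[OF equiv(2,1) assms(7)]
      shuffled_valid[OF shuffled(1)] gr(1) hr(1)
    by (auto simp: reduced_def intro: word_equiv_trans word_equiv_sym)
  moreover have "length Bh = length Bg"
    using splitting_map_fst_block[OF split] by (metis length_map)
  ultimately show ?thesis
    using splitting_nth[OF split] splitting_reduced[OF split gr(1) hr(1)] equiv
      splitting_block_length_le_clique_number[OF assms(1) split]
      maximal_splitting_quotient_reduced[OF split gr(1) hr(1) max]
      shuffled_length[OF shuffled(1)] shuffled_length[OF shuffled(2)] gr(3) hr(3)
    by (intro exI[of _ "length C"] exI[of _ "length Bg"] exI[of _ "C @ Bg @ Rg"] exI[of _ "C @ Bh @ Rh"])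
      (auto simp: Let_def)
qed

end
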